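(* Let $\mathcal{M}$ be a metric space on $\omega$ whose completion $\mathcal{C}(\mathcal{M})$ is a proper metric space. Let $\alpha$ be an ordinal and let $\bar a,\bar b$ be tuples of elements of $\mathcal{C}(\mathcal{M})$ of the same length $p$. Suppose $(\bar a,\bar b)$ is the limit in $\mathcal{C}(\mathcal{M})^{2p}$ of a sequence $\langle(\bar a_n,\bar b_n):n\in\omega\rangle$ such that $\mathrm{R}(\bar a_n,\bar b_n)>\alpha$ for all $n$. Then $\mathrm{R}(\bar a,\bar b)>\alpha$.
   Context: A metric space is proper if every closed ball $\{y:d(x,y)\le r\}$ is compact. The metric on $\mathcal{C}(\mathcal{M})^k$ is $d(\bar u,\bar v)=\sum_{i<k}d(u_i,v_i)$. $\mathrm{REC}$ is the set of recursive, strictly decreasing $f:\omega\to\mathbb{Q}^+$ converging to $0$. For $f\in\mathrm{REC}$, tuples $\bar a=(a_0,\dots,a_{p-1})$, $\bar b=(b_0,\dots,b_{p-1})$ from $\mathcal{C}(\mathcal{M})$ and an ordinal $\alpha$, the game $G^{f,\bar a,\bar b}_\alpha$: at move $i=0,1,\dots$, Player 1 plays an ordinal $\alpha_i$ with $\alpha_0<\alpha$ and $\alpha_i<\alpha_{i-1}$ for $i>0$, together with an element of $\mathcal{M}$: if $i$ is even Player 1 plays $c_i\in\mathcal{M}$ and Player 2 responds $d_i\in\mathcal{M}$; if $i$ is odd Player 1 plays $d_i\in\mathcal{M}$ and Player 2 responds $c_i\in\mathcal{M}$. The game ends after Player 2 answers the move where $\alpha_{k-1}=0$. Player 2 wins iff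 (I) $|d(a_i,c_j)-d(b_i,d_j)|<f(j)$ for all $i<p$, $j<k$, and (II) $|d(c_i,c_j)-d(d_i,d_j)|<f(i)+f(j)$ for all $i,j<k$. $\bar a\sim^f_\alpha\bar b$ means Player 2 has a winning strategy in $G^{f,\bar a,\bar b}_\alpha$; $\mathrm{R}(\bar a,\bar b)$ is the least ordinal $\mu$ such that $\neg(\bar a\sim^f_\mu\bar b)$ for some $f\in\mathrm{REC}$, or $\infty$ if none. *)

theory Defs
  imports "HOL-Analysis.Analysis"
begin

inductive recfn :: "nat \<Rightarrow> (nat list \<Rightarrow> nat) \<Rightarrow> bool" where
  rf_zero: "recfn n (\<lambda>xs. 0)"
| rf_succ: "recfn 1 (\<lambda>xs. Suc (hd xs))"
| rf_proj: "i < n \<Longrightarrow> recfn n (\<lambda>xs. xs ! i)"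
| rf_comp: "recfn m g \<Longrightarrow> (\<forall>j<m. recfn n (hs j)) \<Longrightarrow>
            recfn n (\<lambda>xs. g (map (\<lambda>j. hs j xs) [0..<m]))"
| rf_prim: "recfn n g \<Longrightarrow> recfn (n + 2) h \<Longrightarrow>
            recfn (n + 1) (\<lambda>xs. rec_nat (g (tl xs)) (\<lambda>k r. h (k # r # tl xs)) (hd xs))"
| rf_mu: "recfn (n + 1) g \<Longrightarrow> (\<forall>xs. length xs = n \<longrightarrow> (\<exists>y. g (y # xs) = 0)) \<Longrightarrow>
          recfn n (\<lambda>xs. LEAST y. g (y # xs) = 0)"

definition computable :: "(nat \<Rightarrow> nat) \<Rightarrow> bool" where
  "computable f \<longleftrightarrow> (\<exists>g. recfn 1 g \<and> (\<forall>x. f x = g [x]))"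

definition recursive_rat :: "(nat \<Rightarrow> rat) \<Rightarrow> bool" where
  "recursive_rat f \<longleftrightarrow> (\<exists>g h. computable g \<and> computable h \<and>
      (\<forall>n. f n = of_nat (g n) / of_nat (h n)))"

definition REC :: "(nat \<Rightarrow> rat) set" where
  "REC = {f. recursive_rat f \<and> (\<forall>n. 0 < f n) \<and> (\<forall>m n. m < n \<longrightarrow> f n < f m)
             \<and> (\<lambda>n. real_of_rat (f n)) \<longlonglongrightarrow> 0}"

text \<open>Points of M are naturals, embedded
  into the completion by e. A strategy for Player 2 maps the sequence of Player 1's moves
  (ordinal, point) so far to Player 2's answer. A complete play is a nonempty list of
  Player 1 moves with ordinals below alpha, strictly decreasing, the last one minimal (= 0).\<close>

definition legal_play :: "'o::wellorder \<Rightarrow> ('o \<times> nat) list \<Rightarrow> bool" where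
  "legal_play \<alpha> ms \<longleftrightarrow> ms \<noteq> [] \<and> fst (ms ! 0) < \<alpha>
     \<and> (\<forall>i. Suc i < length ms \<longrightarrow> fst (ms ! Suc i) < fst (ms ! i))
     \<and> \<not> (\<exists>\<beta>. \<beta> < fst (last ms))"

definition play_c :: "(('o \<times> nat) list \<Rightarrow> nat) \<Rightarrow> ('o \<times> nat) list \<Rightarrow> nat \<Rightarrow> nat" where
  "play_c \<sigma> ms i = (if even i then snd (ms ! i) else \<sigma> (take (Suc i) ms))"

definition play_d :: "(('o \<times> nat) list \<Rightarrow> nat) \<Rightarrow> ('o \<times> nat) list \<Rightarrow> nat \<Rightarrow> nat" where
  "play_d \<sigma> ms i = (if even i then \<sigma> (take (Suc i) ms) else snd (ms ! i))"

definition game_won :: "(nat \<Rightarrow> 'a::metric_space) \<Rightarrow> (nat \<Rightarrow> rat) \<Rightarrow> 'a list \<Rightarrow> 'a list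
    \<Rightarrow> nat \<Rightarrow> (nat \<Rightarrow> nat) \<Rightarrow> (nat \<Rightarrow> nat) \<Rightarrow> bool" where
  "game_won e f a b k c d \<longleftrightarrow>
     (\<forall>i<length a. \<forall>j<k. \<bar>dist (a ! i) (e (c j)) - dist (b ! i) (e (d j))\<bar> < real_of_rat (f j))
   \<and> (\<forall>i<k. \<forall>j<k. \<bar>dist (e (c i)) (e (c j)) - dist (e (d i)) (e (d j))\<bar>
                      < real_of_rat (f i) + real_of_rat (f j))"

definition sim :: "(nat \<Rightarrow> 'a::metric_space) \<Rightarrow> (nat \<Rightarrow> rat) \<Rightarrow> 'a list \<Rightarrow> 'a list
    \<Rightarrow> 'o::wellorder \<Rightarrow> bool" where
  "sim e f a b \<alpha> \<longleftrightarrow> (\<exists>\<sigma>. \<forall>ms. legal_play \<alpha> ms \<longrightarrow>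
       game_won e f a b (length ms) (play_c \<sigma> ms) (play_d \<sigma> ms))"

text \<open>R(a,b) > alpha, where R(a,b) is the least ordinal mu with not (a ~^f_mu b) for some
  f in REC: equivalently no mu <= alpha and f in REC with not (a ~^f_mu b).\<close>
definition R_gt :: "(nat \<Rightarrow> 'a::metric_space) \<Rightarrow> 'a list \<Rightarrow> 'a list \<Rightarrow> 'o::wellorder \<Rightarrow> bool" where
  "R_gt e a b \<alpha> \<longleftrightarrow> \<not> (\<exists>\<mu>\<le>\<alpha>. \<exists>f\<in>REC. \<not> sim e f a b \<mu>)"

definition tuple_dist :: "'a::metric_space list \<Rightarrow> 'a list \<Rightarrow> real" where
  "tuple_dist u v = (\<Sum>i<length u. dist (u ! i) (v ! i))"

end

theory Submission
  imports Defs
begin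

text \<open>
  A round of the game is a move of Player 1 and an answer of Player 2. After it, the rest of
  the game is a game of the same kind, with the tuples extended by the two points just played
  (with tolerance f 0 on the new entry) and the roles of c and d exchanged; so winning is
  characterized by recursion on the ordinal.

  Relax the game by allowing Player 2 to answer with arbitrary points of the completion and
  to meet the bounds only non-strictly. Relaxed wins pass to limits: by properness the answers
  to a fixed move in the games for (a_n, b_n) have a convergent subsequence, and its limit is
  a valid answer for (a, b). Conversely, a relaxed win with tolerances f (j + 1) yields a
  genuine win with tolerances f j, because the slack f j - f (j + 1) > 0 leaves room to move
  each answer to a nearby point of M. Both facts follow by transfinite induction from the
  recursive characterization.
\<close>

text \<open>Points played by Player 1 are embedded by \<open>e\<close> and answers of Player 2 by \<open>E\<close>:
  \<open>E = e\<close> gives the game of the paper, \<open>E = id\<close> the relaxed game in which Player 2 answers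
  with points of the completion.\<close>

definition gen_play_c :: "('p \<Rightarrow> 'a) \<Rightarrow> ('q \<Rightarrow> 'a) \<Rightarrow> (('o \<times> 'p) list \<Rightarrow> 'q)
    \<Rightarrow> ('o \<times> 'p) list \<Rightarrow> nat \<Rightarrow> 'a" where
  "gen_play_c e E \<sigma> ms j = (if even j then e (snd (ms ! j)) else E (\<sigma> (take (Suc j) ms)))"

definition gen_play_d :: "('p \<Rightarrow> 'a) \<Rightarrow> ('q \<Rightarrow> 'a) \<Rightarrow> (('o \<times> 'p) list \<Rightarrow> 'q)
    \<Rightarrow> ('o \<times> 'p) list \<Rightarrow> nat \<Rightarrow> 'a" where
  "gen_play_d e E \<sigma> ms j = (if even j then E (\<sigma> (take (Suc j) ms)) else e (snd (ms ! j)))"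

lemma gen_play_c_Cons_0 [simp]: "gen_play_c e E \<sigma> (m # ms) 0 = e (snd m)"
  by (simp add: gen_play_c_def)

lemma gen_play_d_Cons_0 [simp]: "gen_play_d e E \<sigma> (m # ms) 0 = E (\<sigma> [m])"
  by (simp add: gen_play_d_def)

lemma gen_play_c_Cons_Suc [simp]:
  "gen_play_c e E \<sigma> (m # ms) (Suc j) = gen_play_d e E (\<lambda>l. \<sigma> (m # l)) ms j"
  by (simp add: gen_play_c_def gen_play_d_def)

lemma gen_play_d_Cons_Suc [simp]:
  "gen_play_d e E \<sigma> (m # ms) (Suc j) = gen_play_c e E (\<lambda>l. \<sigma> (m # l)) ms j"
  by (simp add: gen_play_c_def gen_play_d_def)

lemma gen_play_cong:
  assumes "ms \<noteq> []" and "\<And>l. l \<noteq> [] \<Longrightarrow> \<sigma> l = \<tau> l"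
  shows "gen_play_c e E \<sigma> ms = gen_play_c e E \<tau> ms" and "gen_play_d e E \<sigma> ms = gen_play_d e E \<tau> ms"
  using assms by (auto simp: gen_play_c_def gen_play_d_def fun_eq_iff neq_Nil_conv)

text \<open>\<open>w ! i\<close> is an extra tolerance for the i-th entries of the tuples, and \<open>r\<close> is
  \<open>(<)\<close> or \<open>(\<le>)\<close>.\<close>

definition gen_won :: "(real \<Rightarrow> real \<Rightarrow> bool) \<Rightarrow> 'a::metric_space list \<Rightarrow> 'a list \<Rightarrow> real list
    \<Rightarrow> (nat \<Rightarrow> real) \<Rightarrow> nat \<Rightarrow> (nat \<Rightarrow> 'a) \<Rightarrow> (nat \<Rightarrow> 'a) \<Rightarrow> bool" where
  "gen_won r A B w f k c d \<longleftrightarrow>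
     (\<forall>i<length A. \<forall>j<k. r \<bar>dist (A ! i) (c j) - dist (B ! i) (d j)\<bar> (w ! i + f j))
   \<and> (\<forall>i<k. \<forall>j<k. r \<bar>dist (c i) (c j) - dist (d i) (d j)\<bar> (f i + f j))"

definition answer_ok :: "(real \<Rightarrow> real \<Rightarrow> bool) \<Rightarrow> 'a::metric_space list \<Rightarrow> 'a list \<Rightarrow> real list
    \<Rightarrow> real \<Rightarrow> 'a \<Rightarrow> 'a \<Rightarrow> bool" where
  "answer_ok r A B w t u v \<longleftrightarrow> (\<forall>i<length A. r \<bar>dist (A ! i) u - dist (B ! i) v\<bar> (w ! i + t))"

lemma game_won_iff_gen_won:
  "game_won e f a b k c d \<longleftrightarrow>
     gen_won (<) a b (replicate (length a) 0) (\<lambda>j. real_of_rat (f j)) k (e \<circ> c) (e \<circ> d)"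
  by (simp add: game_won_def gen_won_def)

lemma gen_won_0 [simp]: "gen_won r A B w f 0 c d"
  by (simp add: gen_won_def)

lemma gen_won_mono:
  assumes "gen_won r A B w f k c d" and "\<And>s t. r s t \<Longrightarrow> r' s t"
  shows "gen_won r' A B w f k c d"
  using assms by (simp add: gen_won_def)

lemma gen_won_Suc:
  assumes "length B = length A" and "length w = length A" and "r 0 (f 0 + f 0)"
  shows "gen_won r A B w f (Suc k) c d \<longleftrightarrow> answer_ok r A B w (f 0) (c 0) (d 0) \<and>
    gen_won r (B @ [d 0]) (A @ [c 0]) (w @ [f 0]) (\<lambda>j. f (Suc j)) k (\<lambda>j. d (Suc j)) (\<lambda>j. c (Suc j))"
proof -
  have tail: "gen_won r (B @ [d 0]) (A @ [c 0]) (w @ [f 0]) (\<lambda>j. f (Suc j)) k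
        (\<lambda>j. d (Suc j)) (\<lambda>j. c (Suc j)) \<longleftrightarrow>
      (\<forall>i<length A. \<forall>j<k.
         r \<bar>dist (A ! i) (c (Suc j)) - dist (B ! i) (d (Suc j))\<bar> (w ! i + f (Suc j))) \<and>
      (\<forall>j<k. r \<bar>dist (c 0) (c (Suc j)) - dist (d 0) (d (Suc j))\<bar> (f 0 + f (Suc j))) \<and>
      (\<forall>i<k. \<forall>j<k.
         r \<bar>dist (c (Suc i)) (c (Suc j)) - dist (d (Suc i)) (d (Suc j))\<bar> (f (Suc i) + f (Suc j)))"
    using assms(1,2) by (auto simp: gen_won_def All_less_Suc nth_append abs_minus_commute)
  show ?thesis
    unfolding tail using assms(3)
    by (auto simp: gen_won_def answer_ok_def All_less_Suc2 abs_minus_commute dist_commute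
        add.commute)
qed

lemma legal_play_Cons:
  "legal_play \<mu> ((\<beta>, x) # ms) \<longleftrightarrow>
     \<beta> < \<mu> \<and> (if ms = [] then \<not> (\<exists>\<gamma>. \<gamma> < \<beta>) else legal_play \<beta> ms)"
proof (cases ms)
  case (Cons m ms')
  then have "(\<forall>i. Suc i < length ((\<beta>, x) # ms) \<longrightarrow>
        fst (((\<beta>, x) # ms) ! Suc i) < fst (((\<beta>, x) # ms) ! i))
      \<longleftrightarrow> fst (ms ! 0) < \<beta> \<and> (\<forall>i. Suc i < length ms \<longrightarrow> fst (ms ! Suc i) < fst (ms ! i))"
    by (auto simp: nth_Cons split: nat.splits)
  with Cons show ?thesis by (auto simp: legal_play_def)
qed (simp add: legal_play_def)

lemma legal_play_Cons_exists:
  fixes \<beta> :: "'o::wellorder"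
  assumes "\<beta> < \<mu>"
  shows "\<exists>ms. legal_play \<mu> ((\<beta>, x) # ms)"
proof (cases "\<exists>\<gamma>. \<gamma> < \<beta>")
  case True
  define \<gamma>\<^sub>0 :: 'o where "\<gamma>\<^sub>0 = (LEAST \<gamma>. True)"
  have "\<gamma>\<^sub>0 \<le> \<gamma>" for \<gamma>
    unfolding \<gamma>\<^sub>0_def by (rule Least_le) simp
  with True assms have "legal_play \<mu> [(\<beta>, x), (\<gamma>\<^sub>0, x)]"
    by (auto simp: legal_play_Cons not_less intro: le_less_trans)
  then show ?thesis by blast
next
  case False
  with assms have "legal_play \<mu> [(\<beta>, x)]" by (simp add: legal_play_Cons)
  then show ?thesis by blast
qed

definition gen_sim :: "(real \<Rightarrow> real \<Rightarrow> bool) \<Rightarrow> (nat \<Rightarrow> 'a::metric_space) \<Rightarrow> ('q \<Rightarrow> 'a)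
    \<Rightarrow> 'a list \<Rightarrow> 'a list \<Rightarrow> real list \<Rightarrow> (nat \<Rightarrow> real) \<Rightarrow> 'o::wellorder \<Rightarrow> bool" where
  "gen_sim r e E A B w f \<mu> \<longleftrightarrow> (\<exists>\<sigma>. \<forall>ms. legal_play \<mu> ms \<longrightarrow>
     gen_won r A B w f (length ms) (gen_play_c e E \<sigma> ms) (gen_play_d e E \<sigma> ms))"

lemma sim_iff_gen_sim:
  fixes \<mu> :: "'o::wellorder"
  shows "sim e f a b \<mu> \<longleftrightarrow> gen_sim (<) e e a b (replicate (length a) 0) (\<lambda>j. real_of_rat (f j)) \<mu>"
proof -
  have "gen_play_c e e \<sigma> ms = e \<circ> play_c \<sigma> ms" "gen_play_d e e \<sigma> ms = e \<circ> play_d \<sigma> ms"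
    for \<sigma> :: "('o \<times> nat) list \<Rightarrow> nat" and ms
    by (auto simp: gen_play_c_def gen_play_d_def play_c_def play_d_def)
  then show ?thesis unfolding sim_def gen_sim_def game_won_iff_gen_won by simp
qed

lemma gen_sim_relax:
  assumes "gen_sim (<) e E A B w f \<mu>"
  shows "gen_sim (\<le>) e id A B w f \<mu>"
proof -
  obtain \<sigma> where \<sigma>: "\<And>ms. legal_play \<mu> ms \<Longrightarrow>
      gen_won (<) A B w f (length ms) (gen_play_c e E \<sigma> ms) (gen_play_d e E \<sigma> ms)"
    using assms by (auto simp: gen_sim_def)
  have "gen_play_c e id (E \<circ> \<sigma>) = gen_play_c e E \<sigma>" "gen_play_d e id (E \<circ> \<sigma>) = gen_play_d e E \<sigma>"
    by (auto simp: gen_play_c_def gen_play_d_def fun_eq_iff)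
  then show ?thesis
    unfolding gen_sim_def using \<sigma> by (metis gen_won_mono less_imp_le)
qed

text \<open>No case distinction on whether \<open>\<beta>\<close> is minimal is needed: then there are no legal
  plays below \<open>\<beta>\<close> and the recursive clause holds vacuously.\<close>

lemma gen_sim_next:
  fixes \<mu> :: "'o::wellorder"
  assumes lengths: "length B = length A" "length w = length A" and diag: "r 0 (f 0 + f 0)"
    and "gen_sim r e E A B w f \<mu>" and "\<beta> < \<mu>"
  shows "\<exists>y. answer_ok r A B w (f 0) (e x) (E y)
           \<and> gen_sim r e E (B @ [E y]) (A @ [e x]) (w @ [f 0]) (\<lambda>j. f (Suc j)) \<beta>"
proof -
  obtain \<sigma> where \<sigma>: "\<And>ms. legal_play \<mu> ms \<Longrightarrow>
      gen_won r A B w f (length ms) (gen_play_c e E \<sigma> ms) (gen_play_d e E \<sigma> ms)"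
    using assms(4) by (auto simp: gen_sim_def)
  let ?y = "\<sigma> [(\<beta>, x)]" and ?\<tau> = "\<lambda>l. \<sigma> ((\<beta>, x) # l)"
  have won: "answer_ok r A B w (f 0) (e x) (E ?y) \<and> gen_won r (B @ [E ?y]) (A @ [e x]) (w @ [f 0])
      (\<lambda>j. f (Suc j)) (length ms) (gen_play_c e E ?\<tau> ms) (gen_play_d e E ?\<tau> ms)"
    if "legal_play \<mu> ((\<beta>, x) # ms)" for ms
    using \<sigma>[OF that] gen_won_Suc[where r = r and f = f, OF lengths diag] by simp
  obtain ms where "legal_play \<mu> ((\<beta>, x) # ms)"
    using legal_play_Cons_exists[OF \<open>\<beta> < \<mu>\<close>] by blast
  moreover have "legal_play \<mu> ((\<beta>, x) # ms)" if "legal_play \<beta> ms" for ms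
    using that \<open>\<beta> < \<mu>\<close> by (subst legal_play_Cons) (auto simp: legal_play_def)
  ultimately show ?thesis
    using won unfolding gen_sim_def by blast
qed

lemma gen_simI:
  fixes \<mu> :: "'o::wellorder"
  assumes lengths: "length B = length A" "length w = length A" and diag: "r 0 (f 0 + f 0)"
    and next_round: "\<And>\<beta> x. \<beta> < \<mu> \<Longrightarrow> \<exists>y. answer_ok r A B w (f 0) (e x) (E y)
           \<and> gen_sim r e E (B @ [E y]) (A @ [e x]) (w @ [f 0]) (\<lambda>j. f (Suc j)) \<beta>"
  shows "gen_sim r e E A B w f \<mu>"
proof -
  obtain Y where Y: "\<And>\<beta> x. \<beta> < \<mu> \<Longrightarrow> answer_ok r A B w (f 0) (e x) (E (Y \<beta> x))
      \<and> gen_sim r e E (B @ [E (Y \<beta> x)]) (A @ [e x]) (w @ [f 0]) (\<lambda>j. f (Suc j)) \<beta>"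
    using next_round by metis
  then obtain T where T: "\<And>\<beta> x ms. \<beta> < \<mu> \<Longrightarrow> legal_play \<beta> ms \<Longrightarrow>
      gen_won r (B @ [E (Y \<beta> x)]) (A @ [e x]) (w @ [f 0]) (\<lambda>j. f (Suc j)) (length ms)
        (gen_play_c e E (T \<beta> x) ms) (gen_play_d e E (T \<beta> x) ms)"
    unfolding gen_sim_def by metis
  define \<sigma> where "\<sigma> l = (case l of [m] \<Rightarrow> Y (fst m) (snd m) | m # l' \<Rightarrow> T (fst m) (snd m) l')" for l
  show ?thesis
    unfolding gen_sim_def
  proof (intro exI allI impI)
    fix ms assume legal: "legal_play \<mu> ms"
    then obtain \<beta> x ms' where ms: "ms = (\<beta>, x) # ms'"
      by (metis legal_play_def list.exhaust prod.exhaust)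
    with legal have "\<beta> < \<mu>" by (simp add: legal_play_Cons)
    let ?\<tau> = "\<lambda>l. \<sigma> ((\<beta>, x) # l)"
    have "gen_won r (B @ [E (Y \<beta> x)]) (A @ [e x]) (w @ [f 0]) (\<lambda>j. f (Suc j)) (length ms')
        (gen_play_c e E ?\<tau> ms') (gen_play_d e E ?\<tau> ms')"
    proof (cases "ms' = []")
      case False
      then have "gen_play_c e E ?\<tau> ms' = gen_play_c e E (T \<beta> x) ms'"
        "gen_play_d e E ?\<tau> ms' = gen_play_d e E (T \<beta> x) ms'"
        by (intro gen_play_cong; auto simp: \<sigma>_def neq_Nil_conv)+
      with False legal T[OF \<open>\<beta> < \<mu>\<close>] show ?thesis by (simp add: ms legal_play_Cons)
    qed simp
    with Y[OF \<open>\<beta> < \<mu>\<close>]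
    show "gen_won r A B w f (length ms) (gen_play_c e E \<sigma> ms) (gen_play_d e E \<sigma> ms)"
      by (simp add: ms gen_won_Suc[where r = r and f = f, OF lengths diag] \<sigma>_def)
  qed
qed

definition nth_tendsto :: "(nat \<Rightarrow> 'a::topological_space list) \<Rightarrow> 'a list \<Rightarrow> bool" where
  "nth_tendsto X x \<longleftrightarrow> (\<forall>n. length (X n) = length x) \<and> (\<forall>i<length x. (\<lambda>n. X n ! i) \<longlonglongrightarrow> x ! i)"

lemma nth_tendsto_subseq:
  assumes "nth_tendsto X x" and "strict_mono s"
  shows "nth_tendsto (\<lambda>n. X (s n)) x"
proof -
  have "(\<lambda>n. X (s n) ! i) \<longlonglongrightarrow> x ! i" if "i < length x" for i
    using LIMSEQ_subseq_LIMSEQ[OF _ assms(2), of "\<lambda>n. X n ! i"] assms(1) that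
    by (simp add: nth_tendsto_def o_def)
  with assms(1) show ?thesis by (simp add: nth_tendsto_def)
qed

lemma nth_tendsto_snoc:
  assumes "nth_tendsto X x" and "Y \<longlonglongrightarrow> y"
  shows "nth_tendsto (\<lambda>n. X n @ [Y n]) (x @ [y])"
  unfolding nth_tendsto_def
proof (intro conjI allI impI)
  fix i assume "i < length (x @ [y])"
  then consider "i < length x" | "i = length x" by fastforce
  then show "(\<lambda>n. (X n @ [Y n]) ! i) \<longlonglongrightarrow> (x @ [y]) ! i"
    by cases (use assms in \<open>simp_all add: nth_tendsto_def nth_append\<close>)
qed (use assms in \<open>simp add: nth_tendsto_def\<close>)

lemma nth_tendsto_append_tuple_dist:
  assumes lim: "(\<lambda>n. tuple_dist (X n @ Y n) (x @ y)) \<longlonglongrightarrow> 0"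
    and lengths: "\<And>n. length (X n) = length x" "\<And>n. length (Y n) = length y"
  shows "nth_tendsto X x" and "nth_tendsto Y y"
proof -
  have nth_lim: "(\<lambda>n. (X n @ Y n) ! i) \<longlonglongrightarrow> (x @ y) ! i" if "i < length x + length y" for i
  proof (rule tendsto_dist_iff[THEN iffD2], rule Lim_null_comparison[OF _ lim],
      rule always_eventually, rule allI)
    fix n
    have "dist ((X n @ Y n) ! i) ((x @ y) ! i) \<le> tuple_dist (X n @ Y n) (x @ y)"
      unfolding tuple_dist_def by (rule member_le_sum) (use that lengths in auto)
    then show "norm (dist ((X n @ Y n) ! i) ((x @ y) ! i)) \<le> tuple_dist (X n @ Y n) (x @ y)"
      by simp
  qed
  have "(\<lambda>n. X n ! i) \<longlonglongrightarrow> x ! i" if "i < length x" for i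
    using nth_lim[of i] that lengths by (simp add: nth_append)
  with lengths show "nth_tendsto X x" by (simp add: nth_tendsto_def)
  have "(\<lambda>n. Y n ! i) \<longlonglongrightarrow> y ! i" if "i < length y" for i
    using nth_lim[of "length x + i"] that lengths by (simp add: nth_append)
  with lengths show "nth_tendsto Y y" by (simp add: nth_tendsto_def)
qed

lemma proper_bounded_convergent_subseq:
  fixes Z :: "nat \<Rightarrow> 'a::metric_space"
  assumes proper: "\<And>(x::'a) r. compact (cball x r)" and "bounded (range Z)"
  obtains l s where "strict_mono s" and "(\<lambda>n. Z (s n)) \<longlonglongrightarrow> l"
proof -
  obtain r x where "range Z \<subseteq> cball x r"
    using assms(2) unfolding bounded_subset_cball by blast
  then have "\<forall>n. Z n \<in> cball x r" by blast
  from seq_compactE[OF compact_imp_seq_compact[OF proper] this] show ?thesis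
    using that by (auto simp: o_def)
qed

lemma answers_bounded:
  assumes "nth_tendsto AN A" "nth_tendsto BN B" "A \<noteq> []" "length B = length A"
    and "\<And>n. answer_ok (\<le>) (AN n) (BN n) w t u (Z n)"
  shows "bounded (range Z)"
proof -
  have A_lim: "(\<lambda>n. AN n ! 0) \<longlonglongrightarrow> A ! 0" and B_lim: "(\<lambda>n. BN n ! 0) \<longlonglongrightarrow> B ! 0"
    using assms(1-4) by (auto simp: nth_tendsto_def)
  obtain KA where KA: "\<And>n. dist (AN n ! 0) u \<le> KA"
    using convergent_imp_bounded[OF tendsto_dist[OF A_lim tendsto_const]]
    by (auto simp: bounded_iff)
  obtain KB where KB: "\<And>n. dist (B ! 0) (BN n ! 0) \<le> KB"
    using convergent_imp_bounded[OF B_lim] bounded_any_center[of _ "B ! 0"] by auto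
  have "dist (B ! 0) (Z n) \<le> KB + KA + w ! 0 + t" for n
  proof -
    have "\<bar>dist (AN n ! 0) u - dist (BN n ! 0) (Z n)\<bar> \<le> w ! 0 + t"
      using assms(1,3) assms(5)[of n] by (auto simp: answer_ok_def nth_tendsto_def)
    moreover have "dist (B ! 0) (Z n) \<le> dist (B ! 0) (BN n ! 0) + dist (BN n ! 0) (Z n)"
      by (rule dist_triangle)
    ultimately show ?thesis using KA[of n] KB[of n] by linarith
  qed
  then show ?thesis
    unfolding bounded_def by blast
qed

lemma answer_ok_limit:
  assumes "nth_tendsto AN A" "nth_tendsto BN B" "length B = length A" "Z \<longlonglongrightarrow> z"
    and "\<And>n. answer_ok (\<le>) (AN n) (BN n) w t u (Z n)"
  shows "answer_ok (\<le>) A B w t u z"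
  unfolding answer_ok_def
proof (intro allI impI)
  fix i assume "i < length A"
  with assms(1-3) have "(\<lambda>n. \<bar>dist (AN n ! i) u - dist (BN n ! i) (Z n)\<bar>)
      \<longlonglongrightarrow> \<bar>dist (A ! i) u - dist (B ! i) z\<bar>"
    by (intro tendsto_intros assms(4)) (auto simp: nth_tendsto_def)
  moreover have "\<And>n. \<bar>dist (AN n ! i) u - dist (BN n ! i) (Z n)\<bar> \<le> w ! i + t"
    using assms(1,5) \<open>i < length A\<close> by (auto simp: answer_ok_def nth_tendsto_def)
  ultimately show "\<bar>dist (A ! i) u - dist (B ! i) z\<bar> \<le> w ! i + t"
    using LIMSEQ_le_const2 by blast
qed

lemma convergent_answers:
  fixes Z :: "nat \<Rightarrow> 'a::metric_space"
  assumes proper: "\<And>(x::'a) r. compact (cball x r)"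
    and "nth_tendsto AN A" "nth_tendsto BN B" "A \<noteq> []" "length B = length A"
    and "\<And>n. answer_ok (\<le>) (AN n) (BN n) w t u (Z n)"
  obtains s z where "strict_mono s" "(\<lambda>n. Z (s n)) \<longlonglongrightarrow> z" "answer_ok (\<le>) A B w t u z"
proof -
  obtain s z where s: "strict_mono s" and lim: "(\<lambda>n. Z (s n)) \<longlonglongrightarrow> z"
    using proper_bounded_convergent_subseq[OF proper answers_bounded[OF assms(2-)]] .
  have "answer_ok (\<le>) A B w t u z"
    by (rule answer_ok_limit[OF nth_tendsto_subseq[OF assms(2) s] nth_tendsto_subseq[OF assms(3) s]
          assms(5) lim assms(6)])
  with s lim that show ?thesis by blast
qed

lemma gen_sim_limit:
  fixes \<mu> :: "'o::wellorder" and e :: "nat \<Rightarrow> 'a::metric_space"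
  assumes proper: "\<And>(x::'a) r. compact (cball x r)"
    and "nth_tendsto AN A" "nth_tendsto BN B" "length B = length A" "length w = length A"
    and "\<And>j. 0 \<le> f j" "\<And>n. gen_sim (\<le>) e id (AN n) (BN n) w f \<mu>"
  shows "gen_sim (\<le>) e id A B w f \<mu>"
  using assms(2-)
proof (induction \<mu> arbitrary: AN A BN B w f rule: less_induct)
  case (less \<mu>)
  note AN = less.prems(1) and BN = less.prems(2) and lengths = less.prems(3,4)
  have diag: "0 \<le> f 0 + f 0" using less.prems(5)[of 0] by simp
  show ?case
  proof (cases "A = []")
    case True
    with AN BN lengths have "AN 0 = A" "BN 0 = B" by (auto simp: nth_tendsto_def)
    with less.prems(6)[of 0] show ?thesis by simp
  next
    case False
    show ?thesis
    proof (rule gen_simI[where r = "(\<le>)" and f = f, OF lengths diag])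
      fix \<beta> x assume "\<beta> < \<mu>"
      have lengths_n: "length (BN n) = length (AN n)" "length w = length (AN n)" for n
        using AN BN lengths by (auto simp: nth_tendsto_def)
      have "\<exists>z. answer_ok (\<le>) (AN n) (BN n) w (f 0) (e x) z \<and>
          gen_sim (\<le>) e id (BN n @ [z]) (AN n @ [e x]) (w @ [f 0]) (\<lambda>j. f (Suc j)) \<beta>" for n
        using gen_sim_next[where r = "(\<le>)" and f = f, OF lengths_n diag less.prems(6) \<open>\<beta> < \<mu>\<close>]
        by (metis id_apply)
      then obtain Z where Z_ok: "\<And>n. answer_ok (\<le>) (AN n) (BN n) w (f 0) (e x) (Z n)"
        and Z_sim: "\<And>n. gen_sim (\<le>) e id (BN n @ [Z n]) (AN n @ [e x]) (w @ [f 0])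
          (\<lambda>j. f (Suc j)) \<beta>"
        by metis
      obtain s z where s: "strict_mono s" and Z_lim: "(\<lambda>n. Z (s n)) \<longlonglongrightarrow> z"
        and z_ok: "answer_ok (\<le>) A B w (f 0) (e x) z"
        using convergent_answers[OF proper AN BN False lengths(1) Z_ok] .
      have "gen_sim (\<le>) e id (B @ [z]) (A @ [e x]) (w @ [f 0]) (\<lambda>j. f (Suc j)) \<beta>"
      proof (rule less.IH[OF \<open>\<beta> < \<mu>\<close>])
        show "nth_tendsto (\<lambda>n. BN (s n) @ [Z (s n)]) (B @ [z])"
          using nth_tendsto_snoc[OF nth_tendsto_subseq[OF BN s] Z_lim] .
        show "nth_tendsto (\<lambda>n. AN (s n) @ [e x]) (A @ [e x])"
          using nth_tendsto_snoc[OF nth_tendsto_subseq[OF AN s] tendsto_const] .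
        show "gen_sim (\<le>) e id (BN (s n) @ [Z (s n)]) (AN (s n) @ [e x]) (w @ [f 0])
            (\<lambda>j. f (Suc j)) \<beta>" for n
          using Z_sim .
      qed (use lengths less.prems(5) in auto)
      with z_ok show "\<exists>y. answer_ok (\<le>) A B w (f 0) (e x) (id y) \<and>
          gen_sim (\<le>) e id (B @ [id y]) (A @ [e x]) (w @ [f 0]) (\<lambda>j. f (Suc j)) \<beta>"
        by auto
    qed
  qed
qed

lemma abs_dist_diff_perturb:
  "\<bar>dist a' c - dist b' d'\<bar> \<le> \<bar>dist a c - dist b d\<bar> + dist a a' + dist b b' + dist d d'"
  using dist_triangle[of a' c a] dist_triangle[of a c a'] dist_triangle[of b' d' b]
    dist_triangle[of b d' d] dist_triangle[of b d b'] dist_triangle[of b' d d']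
  by (simp add: dist_commute)

lemma gen_sim_approx:
  fixes \<mu> :: "'o::wellorder"
  assumes dense: "closure (range e) = UNIV"
    and "length A' = length A" "length B = length A" "length B' = length A"
      "length w = length A" "length w' = length A"
    and "\<And>i. i < length A \<Longrightarrow> dist (A ! i) (A' ! i) + dist (B ! i) (B' ! i) \<le> w' ! i - w ! i"
    and "\<And>j. 0 \<le> g j" "\<And>j. g j < f j" "gen_sim (\<le>) e id A B w g \<mu>"
  shows "gen_sim (<) e e A' B' w' f \<mu>"
  using assms(2-)
proof (induction \<mu> arbitrary: A B A' B' w w' g f rule: less_induct)
  case (less \<mu>)
  note lengths = less.prems(1-5) and close = less.prems(6)
  have diag_g: "0 \<le> g 0 + g 0" and diag_f: "0 < f 0 + f 0"
    using less.prems(7,8)[of 0] by linarith+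
  have lengths': "length B' = length A'" "length w' = length A'"
    using lengths by simp_all
  show ?case
  proof (rule gen_simI[where r = "(<)" and f = f, OF lengths' diag_f])
    fix \<beta> x assume "\<beta> < \<mu>"
    obtain z where z_ok: "answer_ok (\<le>) A B w (g 0) (e x) z"
      and z_sim: "gen_sim (\<le>) e id (B @ [z]) (A @ [e x]) (w @ [g 0]) (\<lambda>j. g (Suc j)) \<beta>"
      using gen_sim_next[where r = "(\<le>)" and f = g, OF lengths(2,4) diag_g less.prems(9) \<open>\<beta> < \<mu>\<close>]
      by (metis id_apply)
    obtain y where y: "dist z (e y) < f 0 - g 0"
      using closure_approachableD[of z "range e" "f 0 - g 0"] dense less.prems(8)[of 0] by auto
    have "answer_ok (<) A' B' w' (f 0) (e x) (e y)"
      unfolding answer_ok_def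
    proof (intro allI impI)
      fix i assume "i < length A'"
      then have "\<bar>dist (A ! i) (e x) - dist (B ! i) z\<bar> \<le> w ! i + g 0"
        and "dist (A ! i) (A' ! i) + dist (B ! i) (B' ! i) \<le> w' ! i - w ! i"
        using z_ok close lengths by (auto simp: answer_ok_def)
      with y abs_dist_diff_perturb[of "A' ! i" "e x" "B' ! i" "e y" "A ! i" "B ! i" z]
      show "\<bar>dist (A' ! i) (e x) - dist (B' ! i) (e y)\<bar> < w' ! i + f 0"
        by linarith
    qed
    moreover have "gen_sim (<) e e (B' @ [e y]) (A' @ [e x]) (w' @ [f 0]) (\<lambda>j. f (Suc j)) \<beta>"
    proof (rule less.IH[OF \<open>\<beta> < \<mu>\<close> _ _ _ _ _ _ _ _ z_sim])
      show "dist ((B @ [z]) ! i) ((B' @ [e y]) ! i) + dist ((A @ [e x]) ! i) ((A' @ [e x]) ! i)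
          \<le> (w' @ [f 0]) ! i - (w @ [g 0]) ! i" if "i < length (B @ [z])" for i
      proof (cases "i < length A")
        case True
        with close[of i] lengths show ?thesis by (simp add: nth_append add.commute)
      next
        case False
        with that lengths y show ?thesis by (simp add: nth_append)
      qed
    qed (use lengths less.prems(7,8) in auto)
    ultimately show "\<exists>y. answer_ok (<) A' B' w' (f 0) (e x) (e y) \<and>
        gen_sim (<) e e (B' @ [e y]) (A' @ [e x]) (w' @ [f 0]) (\<lambda>j. f (Suc j)) \<beta>"
      by blast
  qed
qed

lemma sim_limit:
  fixes \<mu> :: "'o::wellorder" and e :: "nat \<Rightarrow> 'a::metric_space"
  assumes proper: "\<And>(x::'a) r. compact (cball x r)" and dense: "closure (range e) = UNIV"
    and AN: "nth_tendsto AN A" and BN: "nth_tendsto BN B" and "length B = length A"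
    and "\<And>j. 0 < g j" and "\<And>j. g j < f j" and "\<And>n. sim e g (AN n) (BN n) \<mu>"
  shows "sim e f A B \<mu>"
proof -
  let ?zeros = "replicate (length A) (0::real)"
  have "gen_sim (\<le>) e id (AN n) (BN n) ?zeros (\<lambda>j. real_of_rat (g j)) \<mu>" for n
    using gen_sim_relax assms(8)[of n] AN by (auto simp: sim_iff_gen_sim nth_tendsto_def)
  with assms(5,6) have "gen_sim (\<le>) e id A B ?zeros (\<lambda>j. real_of_rat (g j)) \<mu>"
    by (intro gen_sim_limit[OF proper AN BN]) (auto simp: less_imp_le)
  with assms(5-7) have "gen_sim (<) e e A B ?zeros (\<lambda>j. real_of_rat (f j)) \<mu>"
    by (intro gen_sim_approx[OF dense]) (auto simp: less_imp_le of_rat_less)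
  then show ?thesis by (simp add: sim_iff_gen_sim)
qed

lemma computable_Suc:
  assumes "computable G"
  shows "computable (\<lambda>n. G (Suc n))"
proof -
  obtain g where g: "recfn 1 g" "\<And>x. G x = g [x]"
    using assms by (auto simp: computable_def)
  have "recfn 1 (\<lambda>xs. g (map (\<lambda>j. Suc (hd xs)) [0..<1]))"
    using rf_comp[OF g(1), of 1 "\<lambda>j xs. Suc (hd xs)"] rf_succ by simp
  then show ?thesis
    unfolding computable_def using g(2) by force
qed

lemma REC_Suc:
  assumes "f \<in> REC"
  shows "(\<lambda>n. f (Suc n)) \<in> REC"
proof -
  obtain G H where "computable G" "computable H" "\<And>n. f n = of_nat (G n) / of_nat (H n)"
    using assms by (auto simp: REC_def recursive_rat_def)
  then have "recursive_rat (\<lambda>n. f (Suc n))"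
    unfolding recursive_rat_def using computable_Suc by blast
  with assms LIMSEQ_Suc[of "\<lambda>n. real_of_rat (f n)"] show ?thesis
    by (simp add: REC_def)
qed

theorem fact4p5:
  fixes d :: "nat \<Rightarrow> nat \<Rightarrow> real"
    and e :: "nat \<Rightarrow> 'a::metric_space"
    and \<alpha> :: "'o::wellorder"
    and a b :: "'a list"
    and an bn :: "nat \<Rightarrow> 'a list"
  assumes d_metric: "\<And>x y. d x y = 0 \<longleftrightarrow> x = y"
    and d_sym: "\<And>x y. d x y = d y x"
    and d_tri: "\<And>x y z. d x z \<le> d x y + d y z"
    and e_isom: "\<And>x y. dist (e x) (e y) = d x y"
    and e_dense: "closure (range e) = UNIV"
    and compl: "complete (UNIV :: 'a set)"
    and proper: "\<And>(x::'a) r. compact (cball x r)"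
    and len: "length b = length a"
    and len_n: "\<And>n. length (an n) = length a \<and> length (bn n) = length a"
    and lim: "(\<lambda>n. tuple_dist (an n @ bn n) (a @ b)) \<longlonglongrightarrow> 0"
    and R_n: "\<And>n. R_gt e (an n) (bn n) \<alpha>"
  shows "R_gt e a b \<alpha>"
  unfolding R_gt_def
proof
  assume "\<exists>\<mu>\<le>\<alpha>. \<exists>f\<in>REC. \<not> sim e f a b \<mu>"
  then obtain \<mu> f where "\<mu> \<le> \<alpha>" "f \<in> REC" and not_sim: "\<not> sim e f a b \<mu>"
    by blast
  let ?g = "\<lambda>j. f (Suc j)"
  have "sim e ?g (an n) (bn n) \<mu>" for n
    using R_n[of n] REC_Suc[OF \<open>f \<in> REC\<close>] \<open>\<mu> \<le> \<alpha>\<close> by (auto simp: R_gt_def)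
  moreover have "0 < ?g j" "?g j < f j" for j
    using \<open>f \<in> REC\<close> by (simp_all add: REC_def)
  moreover have "nth_tendsto an a" "nth_tendsto bn b"
    using nth_tendsto_append_tuple_dist[OF lim] len len_n by simp_all
  ultimately have "sim e f a b \<mu>"
    by (intro sim_limit[OF proper e_dense _ _ len])
  with not_sim show False ..
qed

end
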